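(* Let $\alpha=(\alpha_1,\dots,\alpha_t)\in\mathcal{P}(n)$ with $\delta(\alpha)=\big(1,2,\dots,q,q^{(s_q)},(q-1)^{(s_{q-1})},\dots,1^{(s_1)}\big)$, let $\overline{\alpha}=(\overline{\alpha}_1,\dots,\overline{\alpha}_q)$ with $\overline{\alpha}_i=q-i+1+\sum_{k=i}^q s_k$, and let $\underline{\alpha}=\overline{\alpha}^*$. If $\alpha\neq\overline{\alpha}$, then $\alpha_i=\alpha_{i+1}$ for some $1\le i\le t$. Equivalently, if $\alpha\neq\underline{\alpha}$, then $\alpha_i-\alpha_{i+1}>1$ for some $1\le i\le t$ (with the convention $\alpha_{t+1}=0$).
   Context: A partition of a positive integer $n$ is a finite non-increasing sequence $\alpha=(\alpha_1,\dots,\alpha_t)$ of positive integers with sum $n$; $\mathcal{P}(n)$ is the set of partitions of $n$, and $\alpha_i=0$ for $i>t$. The diagonal sequence is $\delta(\alpha)=(d_k)_{k\ge1}$ with $d_k=|\{i:1\le i\le k,\ \alpha_i+i-1\ge k\}|$, trailing zeros omitted; every diagonal sequence has the stated form for some $q\ge1$ and integers $s_1,\dots,s_q\ge0$, where $j^{(s)}$ denotes $s$ consecutive entries equal to $j$. The conjugate $\beta^*$ of a partition $\beta$ has parts $\beta^*_j=|\{i:\beta_i\ge j\}|$. *)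

theory Defs
  imports Main
begin

definition is_partition :: "nat \<Rightarrow> nat list \<Rightarrow> bool" where
  "is_partition n a \<longleftrightarrow> 0 < n \<and> sorted_wrt (\<ge>) a \<and> (\<forall>x\<in>set a. 0 < x) \<and> sum_list a = n"

text \<open>1-based part access, with alpha_i = 0 for i > t (and for i = 0).\<close>
definition part :: "nat list \<Rightarrow> nat \<Rightarrow> nat" where
  "part a i = (if 1 \<le> i \<and> i \<le> length a then a ! (i - 1) else 0)"

definition diag :: "nat list \<Rightarrow> nat \<Rightarrow> nat" where
  "diag a k = card {i. 1 \<le> i \<and> i \<le> k \<and> part a i + i - 1 \<ge> k}"

definition diag_shape :: "nat \<Rightarrow> (nat \<Rightarrow> nat) \<Rightarrow> nat list" where
  "diag_shape q s = [1..<q+1] @ concat (map (\<lambda>j. replicate (s j) j) (rev [1..<q+1]))"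

text \<open>delta(a) = L (trailing zeros omitted): the k-th entry equals the k-th element of L
  for k <= |L| and is 0 afterwards.\<close>
definition diag_seq_is :: "nat list \<Rightarrow> nat list \<Rightarrow> bool" where
  "diag_seq_is a L \<longleftrightarrow> (\<forall>k\<ge>1. diag a k = (if k \<le> length L then L ! (k - 1) else 0))"

definition alpha_bar :: "nat \<Rightarrow> (nat \<Rightarrow> nat) \<Rightarrow> nat list" where
  "alpha_bar q s = map (\<lambda>i. q - i + 1 + (\<Sum>k=i..q. s k)) [1..<q+1]"

definition conj_part :: "nat list \<Rightarrow> nat list" where
  "conj_part b = map (\<lambda>j. length (filter (\<lambda>x. j \<le> x) b)) [1..<part b 1 + 1]"

end

(*
  Let e_i = alpha_i + i - 1 be the column in which the hook of row i ends, so that d_k counts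
  the rows i <= k with e_i >= k, i.e. the cells of the k-th antidiagonal of the Young diagram.
  If the parts of alpha are distinct, e is weakly decreasing, so the rows counted by d_k form
  the initial segment {1..d_k}. Comparing d_q = q and d_(q+1) <= q shows t = q, and for k > q
  the equivalence "i <= d_k iff k <= e_i" reads off e_i = q + s_i + ... + s_q, i.e.
  alpha = overline alpha.
  If instead consecutive parts never drop by more than one, the conjugate alpha* has distinct
  parts. Conjugation reflects every antidiagonal, so alpha and alpha* have the same diagonal
  sequence; hence alpha* = overline alpha and alpha = underline alpha.
*)

theory Submission
  imports Defs
begin

section \<open>Partitions as functions\<close>

text \<open>\<open>f i\<close> is the \<open>i\<close>-th part, indexed from 1, and \<open>t\<close> is the
  number of parts.\<close>

definition partition_fun :: "(nat \<Rightarrow> nat) \<Rightarrow> nat \<Rightarrow> bool" where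
  "partition_fun f t \<longleftrightarrow> antimono_on {1..} f \<and> (\<forall>i\<ge>1. 0 < f i \<longleftrightarrow> i \<le> t)"

definition distinct_parts :: "(nat \<Rightarrow> nat) \<Rightarrow> nat \<Rightarrow> bool" where
  "distinct_parts f t \<longleftrightarrow> partition_fun f t \<and> (\<forall>i. 1 \<le> i \<longrightarrow> i < t \<longrightarrow> f (Suc i) < f i)"

definition conj_fun :: "(nat \<Rightarrow> nat) \<Rightarrow> nat \<Rightarrow> nat" where
  "conj_fun f j = card {i. 1 \<le> i \<and> j \<le> f i}"

text \<open>\<open>i \<in> diag_set f k\<close> iff the cell \<open>(i, k + 1 - i)\<close> on the \<open>k\<close>-th antidiagonal lies in the
  Young diagram of \<open>f\<close>.\<close>

definition diag_set :: "(nat \<Rightarrow> nat) \<Rightarrow> nat \<Rightarrow> nat set" where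
  "diag_set f k = {i. 1 \<le> i \<and> i \<le> k \<and> k \<le> f i + i - 1}"

lemma partition_funD:
  assumes "partition_fun f t"
  shows partition_fun_antimono: "\<And>i j. 1 \<le> i \<Longrightarrow> i \<le> j \<Longrightarrow> f j \<le> f i"
    and partition_fun_pos_iff: "\<And>i. 1 \<le> i \<Longrightarrow> 0 < f i \<longleftrightarrow> i \<le> t"
  using assms by (auto simp: partition_fun_def monotone_on_def)

lemma eq_if_same_thresholds_above:
  fixes x y m :: nat
  assumes "m \<le> x" "m \<le> y" "\<And>k. m < k \<Longrightarrow> k \<le> x \<longleftrightarrow> k \<le> y"
  shows "x = y"
proof (rule linorder_cases[of x y])
  assume "x < y"
  then show ?thesis using assms(1) assms(3)[of y] by simp
next
  assume "y < x"
  then show ?thesis using assms(2) assms(3)[of x] by simp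
qed

lemma downclosed_eq_atLeastAtMost:
  fixes U :: "nat set"
  assumes "finite U" "0 \<notin> U" and down: "\<And>i j. j \<in> U \<Longrightarrow> 1 \<le> i \<Longrightarrow> i \<le> j \<Longrightarrow> i \<in> U"
  shows "U = {1..card U}"
proof (cases "U = {}")
  case False
  define m where "m = Max U"
  have "U = {1..m}"
  proof
    show "U \<subseteq> {1..m}"
      using assms(1,2) unfolding m_def by (auto simp: Suc_le_eq) (metis gr0I)
    show "{1..m} \<subseteq> U"
      using down[OF Max_in[OF assms(1) False]] unfolding m_def by auto
  qed
  then show ?thesis by simp
qed simp

lemma le_conj_fun_iff:
  assumes "partition_fun f t" "1 \<le> i" "1 \<le> j"
  shows "i \<le> conj_fun f j \<longleftrightarrow> j \<le> f i"
proof -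
  let ?U = "{i. 1 \<le> i \<and> j \<le> f i}"
  have "?U \<subseteq> {1..t}"
    using assms partition_fun_pos_iff[OF assms(1)] by fastforce
  then have "finite ?U" by (rule finite_subset) simp
  then have "?U = {1..card ?U}"
    using partition_fun_antimono[OF assms(1)]
    by (intro downclosed_eq_atLeastAtMost) (auto intro: le_trans)
  from arg_cong[where f = "\<lambda>X. i \<in> X", OF this]
  show ?thesis using assms(2) by (simp add: conj_fun_def)
qed

lemma partition_fun_conj_fun:
  assumes "partition_fun f t"
  shows "partition_fun (conj_fun f) (f 1)"
  unfolding partition_fun_def
proof (intro conjI allI impI monotone_onI)
  fix j j' :: nat
  assume "j \<in> {1..}" "j' \<in> {1..}" "j \<le> j'"
  then have "i \<le> conj_fun f j" if "1 \<le> i" "i \<le> conj_fun f j'" for i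
    using that le_conj_fun_iff[OF assms] by auto
  then show "conj_fun f j' \<le> conj_fun f j"
    by (cases "conj_fun f j' = 0") auto
next
  fix j :: nat
  assume "1 \<le> j"
  then show "0 < conj_fun f j \<longleftrightarrow> j \<le> f 1"
    using le_conj_fun_iff[OF assms, of 1 j] by linarith
qed

lemma conj_fun_conj_fun:
  assumes "partition_fun f t" "1 \<le> i"
  shows "conj_fun (conj_fun f) i = f i"
proof (rule eq_if_same_thresholds_above[of 0])
  fix j :: nat
  assume "0 < j"
  then show "j \<le> conj_fun (conj_fun f) i \<longleftrightarrow> j \<le> f i"
    using le_conj_fun_iff[OF partition_fun_conj_fun[OF assms(1)], of j i]
      le_conj_fun_iff[OF assms(1) assms(2), of j] assms(2) by simp
qed simp_all

lemma partition_fun_cong: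
  "(\<And>i. 1 \<le> i \<Longrightarrow> f i = g i) \<Longrightarrow> partition_fun f t \<longleftrightarrow> partition_fun g t"
  by (simp add: partition_fun_def monotone_on_def)

lemma conj_fun_cong: "(\<And>i. 1 \<le> i \<Longrightarrow> f i = g i) \<Longrightarrow> conj_fun f = conj_fun g"
  unfolding conj_fun_def by (metis (no_types, lifting) Collect_cong)

lemma card_diag_set_conj_fun:
  assumes "partition_fun f t"
  shows "card (diag_set (conj_fun f) k) = card (diag_set f k)"
proof -
  let ?r = "\<lambda>i. Suc k - i"
  have mem: "?r i \<in> diag_set (conj_fun f) k \<longleftrightarrow> i \<in> diag_set f k" if "i \<in> {1..k}" for i
  proof -
    from that have i: "1 \<le> i" "i \<le> k" by auto
    then have "k \<le> conj_fun f (?r i) + ?r i - 1 \<longleftrightarrow> i \<le> conj_fun f (?r i)"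
      and "k \<le> f i + i - 1 \<longleftrightarrow> ?r i \<le> f i"
      by arith+
    then show ?thesis
      using i le_conj_fun_iff[OF assms, of i "?r i"] by (auto simp: diag_set_def)
  qed
  have sub: "diag_set g k \<subseteq> {1..k}" for g
    by (auto simp: diag_set_def)
  have inv: "?r (?r i) = i" "?r i \<in> {1..k}" if "i \<in> {1..k}" for i
    using that by auto
  have "bij_betw ?r (diag_set f k) (diag_set (conj_fun f) k)"
  proof (rule bij_betw_byWitness[where f' = ?r])
    show "\<forall>i\<in>diag_set f k. ?r (?r i) = i" "\<forall>j\<in>diag_set (conj_fun f) k. ?r (?r j) = j"
      using sub inv(1) by blast+
    show "?r ` diag_set f k \<subseteq> diag_set (conj_fun f) k"
      using sub mem by blast
    show "?r ` diag_set (conj_fun f) k \<subseteq> diag_set f k"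
    proof
      fix i
      assume "i \<in> ?r ` diag_set (conj_fun f) k"
      then obtain j where "j \<in> diag_set (conj_fun f) k" "i = ?r j" by blast
      then show "i \<in> diag_set f k"
        using sub[of "conj_fun f"] mem[of "?r j"] inv[of j] by auto
    qed
  qed
  then show ?thesis by (simp add: bij_betw_same_card)
qed

lemma distinct_parts_conj_fun:
  assumes "partition_fun f t" and steps: "\<And>i. 1 \<le> i \<Longrightarrow> i \<le> t \<Longrightarrow> f i \<le> Suc (f (Suc i))"
  shows "distinct_parts (conj_fun f) (f 1)"
  unfolding distinct_parts_def
proof (intro conjI allI impI partition_fun_conj_fun[OF assms(1)])
  fix j
  assume j: "1 \<le> j" "j < f 1"
  define m where "m = conj_fun f j"
  have "1 \<le> m"
    using j le_conj_fun_iff[OF assms(1), of 1 j] by (simp add: m_def)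
  have "j \<le> f m" "\<not> j \<le> f (Suc m)"
    using le_conj_fun_iff[OF assms(1) \<open>1 \<le> m\<close> j(1)]
      le_conj_fun_iff[OF assms(1) _ j(1), of "Suc m"] by (simp_all add: m_def)
  moreover have "m \<le> t"
    using partition_fun_pos_iff[OF assms(1) \<open>1 \<le> m\<close>] \<open>j \<le> f m\<close> j by simp
  ultimately have "f m = j"
    using steps[OF \<open>1 \<le> m\<close>] by simp
  then show "conj_fun f (Suc j) < conj_fun f j"
    using le_conj_fun_iff[OF assms(1) \<open>1 \<le> m\<close>, of "Suc j"] by (simp add: m_def)
qed

lemma distinct_parts_add_antimono:
  assumes "distinct_parts f t" "1 \<le> i" "i \<le> j" "j \<le> t"
  shows "f j + j \<le> f i + i"
  using assms(3,4)
proof (induction j rule: dec_induct)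
  case (step j)
  then have "f (Suc j) < f j"
    using assms(1,2) by (simp add: distinct_parts_def)
  then show ?case using step by simp
qed simp

lemma diag_set_eq_atLeastAtMost:
  assumes "distinct_parts f t"
  shows "diag_set f k = {1..card (diag_set f k)}"
proof (rule downclosed_eq_atLeastAtMost)
  have P: "partition_fun f t"
    using assms by (simp add: distinct_parts_def)
  show "finite (diag_set f k)"
    by (rule finite_subset[of _ "{1..k}"]) (auto simp: diag_set_def)
  show "0 \<notin> diag_set f k"
    by (simp add: diag_set_def)
  fix i j
  assume j: "j \<in> diag_set f k" and i: "1 \<le> i" "i \<le> j"
  then have "j \<le> t"
    using partition_fun_pos_iff[OF P, of j] by (auto simp: diag_set_def)
  then have "f j + j \<le> f i + i"
    using distinct_parts_add_antimono[OF assms i] by simp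
  then show "i \<in> diag_set f k"
    using i j by (auto simp: diag_set_def)
qed

lemma le_card_diag_set_iff:
  assumes "distinct_parts f t" "1 \<le> i"
  shows "i \<le> card (diag_set f k) \<longleftrightarrow> i \<le> k \<and> k \<le> f i + i - 1"
proof -
  from arg_cong[where f = "\<lambda>X. i \<in> X", OF diag_set_eq_atLeastAtMost[OF assms(1)]]
  show ?thesis
    using assms(2) by (simp add: diag_set_def)
qed

section \<open>The diagonal shape\<close>

definition diag_tail :: "nat \<Rightarrow> (nat \<Rightarrow> nat) \<Rightarrow> nat list" where
  "diag_tail q s = concat (map (\<lambda>j. replicate (s j) j) (rev [1..<q+1]))"

lemma diag_shape_eq: "diag_shape q s = [1..<q+1] @ diag_tail q s"
  by (simp add: diag_shape_def diag_tail_def)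

lemma diag_tail_0 [simp]: "diag_tail 0 s = []"
  by (simp add: diag_tail_def)

lemma diag_tail_Suc [simp]: "diag_tail (Suc q) s = replicate (s (Suc q)) (Suc q) @ diag_tail q s"
  by (simp add: diag_tail_def)

lemma length_diag_tail: "length (diag_tail q s) = (\<Sum>j=1..q. s j)"
  by (induction q) simp_all

lemma set_diag_tail: "set (diag_tail q s) \<subseteq> {1..q}"
  by (induction q) auto

lemma le_nth_diag_tail_iff:
  assumes "m < length (diag_tail q s)" "1 \<le> i" "i \<le> q"
  shows "i \<le> diag_tail q s ! m \<longleftrightarrow> m < (\<Sum>j=i..q. s j)"
  using assms
proof (induction q arbitrary: m)
  case (Suc q)
  show ?case
  proof (cases "m < s (Suc q)")
    case False
    then have m: "m - s (Suc q) < length (diag_tail q s)"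
      using Suc.prems(1) by simp
    show ?thesis
    proof (cases "i = Suc q")
      case True
      then show ?thesis
        using False nth_mem[OF m] set_diag_tail[of q s] by (auto simp: nth_append)
    next
      case False
      then show ?thesis
        using \<open>\<not> m < s (Suc q)\<close> Suc.IH[OF m] Suc.prems(2,3) by (auto simp: nth_append)
    qed
  qed (use Suc.prems in \<open>simp add: nth_append\<close>)
qed simp

lemma part_diag_shape_le: "part (diag_shape q s) k \<le> q"
proof -
  have "set (diag_shape q s) \<subseteq> {1..q}"
    using set_diag_tail[of q s] by (auto simp: diag_shape_eq)
  then show ?thesis
    using nth_mem[of "k - 1" "diag_shape q s"] by (force simp: part_def)
qed

lemma part_diag_shape_self: "1 \<le> k \<Longrightarrow> k \<le> q \<Longrightarrow> part (diag_shape q s) k = k"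
  by (auto simp: part_def diag_shape_eq nth_append simp del: upt_Suc)

lemma le_part_diag_shape_iff:
  assumes "q < k" "1 \<le> i" "i \<le> q"
  shows "i \<le> part (diag_shape q s) k \<longleftrightarrow> k \<le> q + (\<Sum>j=i..q. s j)"
proof (cases "k \<le> length (diag_shape q s)")
  case True
  then have "k - 1 - q < length (diag_tail q s)"
    using assms(1) by (simp add: diag_shape_eq del: upt_Suc)
  moreover have "part (diag_shape q s) k = diag_tail q s ! (k - 1 - q)"
    using True assms(1) by (auto simp: part_def diag_shape_eq nth_append simp del: upt_Suc)
  ultimately show ?thesis
    using le_nth_diag_tail_iff[OF _ assms(2,3)] assms(1) by auto
next
  case False
  have "(\<Sum>j=i..q. s j) \<le> (\<Sum>j=1..q. s j)"
    using assms(2) by (intro sum_mono2) auto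
  then show ?thesis
    using False assms by (simp add: part_def diag_shape_eq length_diag_tail del: upt_Suc)
qed

lemma part_alpha_bar:
  "part (alpha_bar q s) i = (if 1 \<le> i \<and> i \<le> q then q - i + 1 + (\<Sum>k=i..q. s k) else 0)"
  by (auto simp: part_def alpha_bar_def simp del: upt_Suc)

lemma distinct_parts_diag_shape:
  assumes "distinct_parts f t" "1 \<le> q"
    and diag: "\<And>k. 1 \<le> k \<Longrightarrow> card (diag_set f k) = part (diag_shape q s) k"
    and "1 \<le> i"
  shows "f i = part (alpha_bar q s) i"
proof -
  have P: "partition_fun f t"
    using assms(1) by (simp add: distinct_parts_def)
  have mem: "i \<le> part (diag_shape q s) k \<longleftrightarrow> i \<le> k \<and> k \<le> f i + i - 1"
    if "1 \<le> i" "1 \<le> k" for i k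
    using le_card_diag_set_iff[OF assms(1) \<open>1 \<le> i\<close>, of k] diag[OF \<open>1 \<le> k\<close>] by simp
  have "q \<le> t"
    using mem[of q q] part_diag_shape_self[of q q s] partition_fun_pos_iff[OF P, of q] assms(2)
    by (cases "f q") auto
  moreover have "\<not> Suc q \<le> t"
    using mem[of "Suc q" "Suc q"] part_diag_shape_le[of q s "Suc q"]
      partition_fun_pos_iff[OF P, of "Suc q"] by auto
  ultimately have "t = q" by simp
  have hook: "f i + i - 1 = q + (\<Sum>j=i..q. s j)" if "1 \<le> i" "i \<le> q" for i
  proof (rule eq_if_same_thresholds_above[of q])
    show "q \<le> f i + i - 1"
      using mem[of i q] part_diag_shape_self[of q q s] that by simp
    fix k
    assume "q < k"
    then show "k \<le> f i + i - 1 \<longleftrightarrow> k \<le> q + (\<Sum>j=i..q. s j)"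
      using mem[of i k] le_part_diag_shape_iff[OF \<open>q < k\<close> that, of s] that by simp
  qed simp
  show ?thesis
  proof (cases "i \<le> q")
    case True
    then show ?thesis
      using hook[OF assms(4) True] assms(4) by (simp add: part_alpha_bar)
  next
    case False
    then show ?thesis
      using partition_fun_pos_iff[OF P assms(4)] \<open>t = q\<close> by (simp add: part_alpha_bar)
  qed
qed

section \<open>Partitions as lists\<close>

lemma part_pos_iff:
  assumes "\<forall>x\<in>set a. 0 < x" "1 \<le> i"
  shows "0 < part a i \<longleftrightarrow> i \<le> length a"
  using assms nth_mem[of "i - 1" a] by (auto simp: part_def)

lemma partition_fun_part:
  assumes "is_partition n a"
  shows "partition_fun (part a) (length a)"
  unfolding partition_fun_def
proof (intro conjI allI impI monotone_onI)
  fix i j :: nat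
  assume "i \<in> {1..}" "j \<in> {1..}" "i \<le> j"
  with assms show "part a j \<le> part a i"
    by (cases "i = j") (auto simp: part_def is_partition_def sorted_wrt_iff_nth_less)
next
  fix i :: nat
  assume "1 \<le> i"
  with assms show "0 < part a i \<longleftrightarrow> i \<le> length a"
    by (simp add: part_pos_iff is_partition_def)
qed

lemma part_inject:
  assumes "\<forall>x\<in>set a. 0 < x" "\<forall>x\<in>set b. 0 < x" "\<And>i. 1 \<le> i \<Longrightarrow> part a i = part b i"
  shows "a = b"
proof (rule nth_equalityI)
  show "length a = length b"
    by (rule eq_if_same_thresholds_above[of 0])
      (use assms part_pos_iff[OF assms(1)] part_pos_iff[OF assms(2)] in auto)
  fix m
  assume "m < length a"
  then show "a ! m = b ! m"
    using assms(3)[of "Suc m"] \<open>length a = length b\<close> by (simp add: part_def)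
qed

lemma conj_fun_part:
  assumes "1 \<le> j"
  shows "conj_fun (part b) j = length (filter (\<lambda>x. j \<le> x) b)"
proof -
  have "{i. 1 \<le> i \<and> j \<le> part b i} = Suc ` {m. m < length b \<and> j \<le> b ! m}"
    (is "?L = ?R")
  proof
    show "?L \<subseteq> ?R"
    proof
      fix i
      assume "i \<in> ?L"
      then have "i - 1 \<in> {m. m < length b \<and> j \<le> b ! m}" "i = Suc (i - 1)"
        using assms by (auto simp: part_def split: if_splits)
      then show "i \<in> ?R" by blast
    qed
    show "?R \<subseteq> ?L"
      by (auto simp: part_def)
  qed
  then show ?thesis
    by (simp add: conj_fun_def length_filter_conv_card card_image)
qed

lemma part_conj_part:
  assumes "partition_fun (part b) t" "1 \<le> j"
  shows "part (conj_part b) j = conj_fun (part b) j"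
proof (cases "j \<le> part b 1")
  case True
  then show ?thesis
    using assms(2) by (auto simp: part_def conj_part_def conj_fun_part simp del: upt_Suc)
next
  case False
  have "part b i < j" if "1 \<le> i" for i
    using False that partition_fun_antimono[OF assms(1), of 1 i] by simp
  then have empty: "{i. 1 \<le> i \<and> j \<le> part b i} = {}"
    by (auto simp: not_le[symmetric])
  have "conj_fun (part b) j = 0"
    unfolding conj_fun_def empty by simp
  then show ?thesis
    using False by (simp add: part_def conj_part_def)
qed

lemma conj_part_pos: "\<forall>x\<in>set (conj_part b). 0 < x"
proof
  fix x
  assume "x \<in> set (conj_part b)"
  then obtain j where j: "1 \<le> j" "j \<le> part b 1" and x: "x = length (filter (\<lambda>x. j \<le> x) b)"
    by (auto simp: conj_part_def)
  then have "b ! 0 \<in> set (filter (\<lambda>x. j \<le> x) b)"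
    by (auto simp: part_def split: if_splits intro!: nth_mem)
  then show "0 < x"
    using x by (metis length_pos_if_in_set)
qed

lemma alpha_bar_pos: "\<forall>x\<in>set (alpha_bar q s). 0 < x"
  by (auto simp: alpha_bar_def)

lemma diag_seq_is_iff:
  "diag_seq_is a L \<longleftrightarrow> (\<forall>k\<ge>1. card (diag_set (part a) k) = part L k)"
  by (simp add: diag_seq_is_def diag_def diag_set_def part_def)

lemma eq_alpha_bar_if_distinct_parts:
  assumes "is_partition n a" "1 \<le> q" "diag_seq_is a (diag_shape q s)"
    and distinct: "\<And>i. 1 \<le> i \<Longrightarrow> i < length a \<Longrightarrow> part a (Suc i) \<noteq> part a i"
  shows "a = alpha_bar q s"
proof (rule part_inject)
  have P: "partition_fun (part a) (length a)"
    using assms(1) by (rule partition_fun_part)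
  have "distinct_parts (part a) (length a)"
    unfolding distinct_parts_def
  proof (intro conjI P allI impI)
    fix i
    assume "1 \<le> i" "i < length a"
    then show "part a (Suc i) < part a i"
      using distinct partition_fun_antimono[OF P, of i "Suc i"] by fastforce
  qed
  then show "part a i = part (alpha_bar q s) i" if "1 \<le> i" for i
    using distinct_parts_diag_shape[OF _ assms(2) _ that] assms(3) by (simp add: diag_seq_is_iff)
  show "\<forall>x\<in>set a. 0 < x"
    using assms(1) by (simp add: is_partition_def)
qed (rule alpha_bar_pos)

lemma eq_conj_alpha_bar_if_steps_le_one:
  assumes "is_partition n a" "1 \<le> q" "diag_seq_is a (diag_shape q s)"
    and "\<And>i. 1 \<le> i \<Longrightarrow> i \<le> length a \<Longrightarrow> part a i \<le> Suc (part a (Suc i))"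
  shows "a = conj_part (alpha_bar q s)"
proof (rule part_inject)
  let ?p = "part a" and ?ab = "alpha_bar q s"
  have P: "partition_fun ?p (length a)"
    using assms(1) by (rule partition_fun_part)
  have "distinct_parts (conj_fun ?p) (?p 1)"
    using assms(4) by (rule distinct_parts_conj_fun[OF P])
  then have ab: "conj_fun ?p j = part ?ab j" if "1 \<le> j" for j
    using distinct_parts_diag_shape[OF _ assms(2) _ that] card_diag_set_conj_fun[OF P] assms(3)
    by (simp add: diag_seq_is_iff)
  then have "partition_fun (part ?ab) (?p 1) \<longleftrightarrow> partition_fun (conj_fun ?p) (?p 1)"
    by (intro partition_fun_cong) simp
  then have "partition_fun (part ?ab) (?p 1)"
    using partition_fun_conj_fun[OF P] by simp
  then show "?p i = part (conj_part ?ab) i" if "1 \<le> i" for i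
    using part_conj_part[OF _ that] conj_fun_cong[OF ab] conj_fun_conj_fun[OF P that] by simp
  show "\<forall>x\<in>set a. 0 < x"
    using assms(1) by (simp add: is_partition_def)
qed (rule conj_part_pos)

theorem corollary2p7:
  fixes n q :: nat and s :: "nat \<Rightarrow> nat" and a :: "nat list"
  assumes "is_partition n a"
    and "1 \<le> q"
    and "diag_seq_is a (diag_shape q s)"
  shows "(a \<noteq> alpha_bar q s \<longrightarrow>
            (\<exists>i. 1 \<le> i \<and> i \<le> length a \<and> part a i = part a (i + 1)))
       \<and> (a \<noteq> conj_part (alpha_bar q s) \<longrightarrow>
            (\<exists>i. 1 \<le> i \<and> i \<le> length a \<and> int (part a i) - int (part a (i + 1)) > 1))"
proof (intro conjI impI)
  assume "a \<noteq> alpha_bar q s"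
  then obtain i where "1 \<le> i" "i < length a" "part a (Suc i) = part a i"
    using eq_alpha_bar_if_distinct_parts[OF assms] by blast
  then show "\<exists>i. 1 \<le> i \<and> i \<le> length a \<and> part a i = part a (i + 1)"
    by auto
next
  assume "a \<noteq> conj_part (alpha_bar q s)"
  then obtain i where "1 \<le> i" "i \<le> length a" "\<not> part a i \<le> Suc (part a (Suc i))"
    using eq_conj_alpha_bar_if_steps_le_one[OF assms] by blast
  then show "\<exists>i. 1 \<le> i \<and> i \<le> length a \<and> int (part a i) - int (part a (i + 1)) > 1"
    by auto
qed

end
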